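(* Let $f=f(x_1,\ldots,x_n)$ be a positive canalyzing Boolean function with $k\ge 0$ relevant variables. Then $f$ has at least $k+1$ extremal points, and it has exactly $k+1$ extremal points if and only if $f$ is linear read-once.
   Context: $B=\{0,1\}$; $\preceq$ is the coordinatewise order on $B^n$. $f$ is positive if $f(\mathbf{x})=1$ and $\mathbf{x}\preceq\mathbf{y}$ imply $f(\mathbf{y})=1$. Extremal points are the $\preceq$-maximal false points (maximal zeros) and $\preceq$-minimal true points (minimal ones). $f_{|x_i=\alpha}$ denotes the function of the remaining $n-1$ variables obtained by fixing $x_i=\alpha$. A variable $x_i$ is relevant if $f_{|x_i=0}\not\equiv f_{|x_i=1}$. $f$ is canalyzing if for some $i$, $f_{|x_i=0}$ or $f_{|x_i=1}$ is a constant function. A function is linear read-once (lro) if it is constant or can be represented by a nested formula: the literals $x,\overline{x}$ are nested formulas, and $x\vee t$, $x\wedge t$, $\overline{x}\vee t$, $\overline{x}\wedge t$ are nested formulas whenever $t$ is a nested formula containing neither $x$ nor $\overline{x}$. *)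

theory Defs
  imports Main
begin

text \<open>Boolean functions of n variables: f :: bool list \<Rightarrow> bool, considered on
  the points of B^n, i.e. lists of length n (False = 0, True = 1).
  Variables are indexed 0,...,n-1.\<close>

definition points :: "nat \<Rightarrow> bool list set" where
  "points n = {x. length x = n}"

definition leqB :: "bool list \<Rightarrow> bool list \<Rightarrow> bool" where
  "leqB x y \<longleftrightarrow> length x = length y \<and> (\<forall>i<length x. x ! i \<longrightarrow> y ! i)"

definition positive :: "nat \<Rightarrow> (bool list \<Rightarrow> bool) \<Rightarrow> bool" where
  "positive n f \<longleftrightarrow> (\<forall>x\<in>points n. \<forall>y\<in>points n. f x \<and> leqB x y \<longrightarrow> f y)"

definition max_zeros :: "nat \<Rightarrow> (bool list \<Rightarrow> bool) \<Rightarrow> bool list set" where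
  "max_zeros n f = {x\<in>points n. \<not> f x \<and>
      (\<forall>y\<in>points n. \<not> f y \<and> leqB x y \<longrightarrow> y = x)}"

definition min_ones :: "nat \<Rightarrow> (bool list \<Rightarrow> bool) \<Rightarrow> bool list set" where
  "min_ones n f = {x\<in>points n. f x \<and>
      (\<forall>y\<in>points n. f y \<and> leqB y x \<longrightarrow> y = x)}"

definition extremal_points :: "nat \<Rightarrow> (bool list \<Rightarrow> bool) \<Rightarrow> bool list set" where
  "extremal_points n f = max_zeros n f \<union> min_ones n f"

definition restrict :: "(bool list \<Rightarrow> bool) \<Rightarrow> nat \<Rightarrow> bool \<Rightarrow> bool list \<Rightarrow> bool" where
  "restrict f i a = (\<lambda>ys. f (take i ys @ a # drop i ys))"

definition relevant :: "nat \<Rightarrow> (bool list \<Rightarrow> bool) \<Rightarrow> nat \<Rightarrow> bool" where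
  "relevant n f i \<longleftrightarrow> i < n \<and>
     (\<exists>ys\<in>points (n - 1). restrict f i False ys \<noteq> restrict f i True ys)"

definition canalyzing :: "nat \<Rightarrow> (bool list \<Rightarrow> bool) \<Rightarrow> bool" where
  "canalyzing n f \<longleftrightarrow> (\<exists>i<n. \<exists>a c. \<forall>ys\<in>points (n - 1). restrict f i a ys = c)"

datatype nested = Lit nat bool | NOr nat bool nested | NAnd nat bool nested

fun nvars :: "nested \<Rightarrow> nat set" where
  "nvars (Lit i b) = {i}"
| "nvars (NOr i b t) = insert i (nvars t)"
| "nvars (NAnd i b t) = insert i (nvars t)"

fun wf_nested :: "nat \<Rightarrow> nested \<Rightarrow> bool" where
  "wf_nested n (Lit i b) \<longleftrightarrow> i < n"
| "wf_nested n (NOr i b t) \<longleftrightarrow> i < n \<and> i \<notin> nvars t \<and> wf_nested n t"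
| "wf_nested n (NAnd i b t) \<longleftrightarrow> i < n \<and> i \<notin> nvars t \<and> wf_nested n t"

fun eval_lit :: "nat \<Rightarrow> bool \<Rightarrow> bool list \<Rightarrow> bool" where
  "eval_lit i b x = (if b then x ! i else \<not> x ! i)"

fun eval_nested :: "nested \<Rightarrow> bool list \<Rightarrow> bool" where
  "eval_nested (Lit i b) x = eval_lit i b x"
| "eval_nested (NOr i b t) x = (eval_lit i b x \<or> eval_nested t x)"
| "eval_nested (NAnd i b t) x = (eval_lit i b x \<and> eval_nested t x)"

definition lro :: "nat \<Rightarrow> (bool list \<Rightarrow> bool) \<Rightarrow> bool" where
  "lro n f \<longleftrightarrow> (\<exists>c. \<forall>x\<in>points n. f x = c) \<or>
     (\<exists>t. wf_nested n t \<and> (\<forall>x\<in>points n. f x = eval_nested t x))"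

end

theory Submission
  imports Defs
begin

text \<open>The proof is by induction on the number \<open>k\<close> of relevant variables. A positive \<open>f\<close> with
  \<open>k \<ge> 1\<close> has a relevant variable \<open>x\<^sub>j\<close> (one that is \<open>1\<close> at the fewest true points) such
  that one of the subfunctions \<open>f|x\<^sub>j=1\<close>, \<open>f|x\<^sub>j=0\<close> still depends on the other \<open>k - 1\<close>
  relevant variables; by duality, say \<open>f\<^sub>1 = f|x\<^sub>j=1\<close>. The maximal zeros of \<open>f\<^sub>1\<close> are the
  maximal zeros \<open>z\<close> of \<open>f\<close> with \<open>z\<^sub>j = 1\<close>, the minimal ones of \<open>f\<^sub>1\<close> inject into those of
  \<open>f\<close>, and as \<open>x\<^sub>j\<close> is relevant, \<open>f\<close> has a maximal zero with \<open>z\<^sub>j = 0\<close>. This gives \<open>k + 1\<close>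
  extremal points. In the equality case that maximal zero \<open>z\<^sub>0\<close> is unique and \<open>f\<^sub>1\<close> is
  canalyzing by induction, which forces \<open>f\<close> to be canalyzing: essentially, all zeros of \<open>f\<close>
  with \<open>x\<^sub>j = 0\<close> lie below \<open>z\<^sub>0\<close>.

  If \<open>x\<^sub>j = c\<close> forces \<open>f = c\<close>, then \<open>f\<close> has the extremal points of \<open>f|x\<^sub>j=\<not>c\<close> plus one
  (the unit vector \<open>e\<^sub>j\<close>, or dually its complement) and the relevant variables of
  \<open>f|x\<^sub>j=\<not>c\<close> plus \<open>x\<^sub>j\<close>. Hence equality passes to \<open>f|x\<^sub>j=\<not>c\<close>, which by induction is a
  nested formula, and so is \<open>f\<close>; conversely, peeling off the outermost variable of a nested
  formula removes exactly one relevant variable and one extremal point.\<close>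

section \<open>The cube and its extremal points\<close>

lemma in_points_iff [simp]: "x \<in> points n \<longleftrightarrow> length x = n"
  by (simp add: points_def)

lemma ball_points_iff [simp]: "(\<forall>x\<in>points n. P x) \<longleftrightarrow> (\<forall>x. length x = n \<longrightarrow> P x)"
  by auto

lemma bex_points_iff [simp]: "(\<exists>x\<in>points n. P x) \<longleftrightarrow> (\<exists>x. length x = n \<and> P x)"
  by auto

lemma finite_bool_lists_length [simp]: "finite {x :: bool list. length x = n}"
  using finite_lists_length_eq[of "UNIV :: bool set" n] by simp

lemma leqB_refl [simp]: "leqB x x"
  by (simp add: leqB_def)

lemma leqB_trans: "leqB x y \<Longrightarrow> leqB y z \<Longrightarrow> leqB x z"
  by (simp add: leqB_def)

lemma leqB_antisym: "leqB x y \<Longrightarrow> leqB y x \<Longrightarrow> x = y"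
  unfolding leqB_def by (auto intro: nth_equalityI)

lemma leqB_length: "leqB x y \<Longrightarrow> length y = length x"
  by (simp add: leqB_def)

lemma leqB_nthD: "leqB x y \<Longrightarrow> i < length x \<Longrightarrow> x ! i \<Longrightarrow> y ! i"
  by (simp add: leqB_def)

lemma nth_list_update_if [simp]:
  "j < length x \<Longrightarrow> x[i := a] ! j = (if i = j then a else x ! j)"
  by (cases "i = j") auto

lemma list_update_eq_self [simp]: "x ! i = a \<Longrightarrow> x[i := a] = x"
  by auto

lemma leqB_update_True [simp]: "leqB x (x[i := True])"
  by (auto simp: leqB_def)

lemma leqB_update_False [simp]: "leqB (x[i := False]) x"
  by (auto simp: leqB_def)

lemma leqB_update_mono: "leqB x y \<Longrightarrow> leqB (x[i := a]) (y[i := a])"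
  by (auto simp: leqB_def)

lemma leqB_update_False_iff: "leqB (x[i := False]) y \<longleftrightarrow> leqB x (y[i := True])"
  unfolding leqB_def by (cases "i < length x") (auto simp: list_update_beyond)

lemma replicate_False_leqB_iff [simp]: "leqB (replicate n False) x \<longleftrightarrow> length x = n"
  by (auto simp: leqB_def)

lemma leqB_replicate_True_iff [simp]: "leqB x (replicate n True) \<longleftrightarrow> length x = n"
  by (auto simp: leqB_def)

lemma leqB_replicate_False_iff [simp]: "leqB x (replicate n False) \<longleftrightarrow> x = replicate n False"
  unfolding leqB_def by (auto intro: nth_equalityI)

lemma replicate_True_leqB_iff [simp]: "leqB (replicate n True) x \<longleftrightarrow> x = replicate n True"
  unfolding leqB_def by (auto intro: nth_equalityI)

lemma positiveD: "positive n f \<Longrightarrow> length x = n \<Longrightarrow> leqB x y \<Longrightarrow> f x \<Longrightarrow> f y"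
  unfolding positive_def by (metis in_points_iff leqB_length)

lemma positive_update: "positive n f \<Longrightarrow> length x = n \<Longrightarrow> f (x[i := False]) \<Longrightarrow> f (x[i := a])"
  using positiveD[of n f "x[i := False]" "x[i := a]"]
  by (cases a) (auto simp: leqB_def)

lemma strict_leqB_asymp_transp:
  "asymp_on A (\<lambda>x y. leqB x y \<and> x \<noteq> y)" "transp_on A (\<lambda>x y. leqB x y \<and> x \<noteq> y)"
  unfolding asymp_on_def transp_on_def by (metis leqB_antisym, metis leqB_antisym leqB_trans)

lemma exists_leqB_maximal_above:
  assumes "finite S" "x \<in> S"
  obtains m where "m \<in> S" "leqB x m" "\<And>y. y \<in> S \<Longrightarrow> leqB m y \<Longrightarrow> y = m"
proof -
  let ?T = "{y \<in> S. leqB x y}" and ?R = "\<lambda>x y. leqB x y \<and> x \<noteq> y"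
  have "finite ?T" "?T \<noteq> {}" using assms by auto
  then obtain m where "m \<in> ?T" "\<forall>y\<in>?T. y \<noteq> m \<longrightarrow> \<not> ?R m y"
    using Finite_Set.bex_max_element[of ?T ?R] strict_leqB_asymp_transp by blast
  then show thesis using that leqB_trans by blast
qed

lemma exists_leqB_minimal_below:
  assumes "finite S" "x \<in> S"
  obtains m where "m \<in> S" "leqB m x" "\<And>y. y \<in> S \<Longrightarrow> leqB y m \<Longrightarrow> y = m"
proof -
  let ?T = "{y \<in> S. leqB y x}" and ?R = "\<lambda>x y. leqB x y \<and> x \<noteq> y"
  have "finite ?T" "?T \<noteq> {}" using assms by auto
  then obtain m where "m \<in> ?T" "\<forall>y\<in>?T. y \<noteq> m \<longrightarrow> \<not> ?R y m"
    using Finite_Set.bex_min_element[of ?T ?R] strict_leqB_asymp_transp by blast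
  then show thesis using that leqB_trans by blast
qed

lemma exists_max_zero_above:
  assumes "length x = n" "\<not> f x"
  obtains z where "z \<in> max_zeros n f" "leqB x z"
proof -
  obtain z where "z \<in> {y \<in> points n. \<not> f y}" "leqB x z"
    "\<And>y. y \<in> {y \<in> points n. \<not> f y} \<Longrightarrow> leqB z y \<Longrightarrow> y = z"
    using exists_leqB_maximal_above[of "{y \<in> points n. \<not> f y}" x] assms by auto
  then show thesis using that unfolding max_zeros_def by blast
qed

lemma exists_min_one_below:
  assumes "length x = n" "f x"
  obtains t where "t \<in> min_ones n f" "leqB t x"
proof -
  obtain t where "t \<in> {y \<in> points n. f y}" "leqB t x"
    "\<And>y. y \<in> {y \<in> points n. f y} \<Longrightarrow> leqB y t \<Longrightarrow> y = t"
    using exists_leqB_minimal_below[of "{y \<in> points n. f y}" x] assms by auto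
  then show thesis using that unfolding min_ones_def by blast
qed

lemma card_extremal_points:
  "card (extremal_points n f) = card (min_ones n f) + card (max_zeros n f)"
proof -
  have "finite (min_ones n f)" "finite (max_zeros n f)"
    by (auto simp: min_ones_def max_zeros_def)
  moreover have "min_ones n f \<inter> max_zeros n f = {}"
    by (auto simp: min_ones_def max_zeros_def)
  ultimately have "card (max_zeros n f \<union> min_ones n f) = card (max_zeros n f) + card (min_ones n f)"
    by (simp add: card_Un_disjoint Int_commute)
  then show ?thesis
    unfolding extremal_points_def by simp
qed

section \<open>Relevant variables\<close>

definition relevant_vars :: "nat \<Rightarrow> (bool list \<Rightarrow> bool) \<Rightarrow> nat set" where
  "relevant_vars n f = {i. i < n \<and> (\<exists>x\<in>points n. f (x[i := False]) \<noteq> f (x[i := True]))}"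

lemma relevant_iff_in_relevant_vars: "relevant n f i \<longleftrightarrow> i \<in> relevant_vars n f"
proof
  assume "relevant n f i"
  then obtain ys where i: "i < n" and "ys \<in> points (n - 1)"
    and ne: "f (take i ys @ False # drop i ys) \<noteq> f (take i ys @ True # drop i ys)"
    unfolding relevant_def restrict_def by blast
  then have ys: "length ys = n - 1" by simp
  let ?x = "take i ys @ False # drop i ys"
  have "length (take i ys) = i" using i ys by simp
  then have "?x[i := a] = take i ys @ a # drop i ys" for a
    by (simp add: list_update_append)
  then have "f (?x[i := False]) \<noteq> f (?x[i := True])" using ne by simp
  moreover have "?x \<in> points n" using i ys by simp
  ultimately show "i \<in> relevant_vars n f"
    using i unfolding relevant_vars_def by blast
next
  assume "i \<in> relevant_vars n f"
  then obtain x where i: "i < n" and "x \<in> points n" and ne: "f (x[i := False]) \<noteq> f (x[i := True])"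
    unfolding relevant_vars_def by blast
  then have x: "length x = n" by simp
  let ?ys = "take i x @ drop (Suc i) x"
  have "x[i := a] = take i ?ys @ a # drop i ?ys" for a
    using upd_conv_take_nth_drop[of i x a] i x by simp
  moreover have "length ?ys = n - 1" using i x by simp
  ultimately show "relevant n f i"
    unfolding relevant_def restrict_def using ne i by (metis in_points_iff)
qed

lemma relevant_vars_subset: "relevant_vars n f \<subseteq> {..<n}"
  unfolding relevant_vars_def by auto

lemma finite_relevant_vars [simp]: "finite (relevant_vars n f)"
  using finite_subset[OF relevant_vars_subset] by blast

lemma update_irrelevant:
  assumes "i \<notin> relevant_vars n f" "length x = n"
  shows "f (x[i := a]) = f x"
proof (cases "i < n")
  case True
  then have "f (x[i := False]) = f (x[i := True])" using assms unfolding relevant_vars_def by auto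
  then have "f (x[i := a]) = f (x[i := x ! i])" by (cases a; cases "x ! i") auto
  then show ?thesis by simp
qed (use assms in \<open>simp add: list_update_beyond\<close>)

lemma relevant_vars_empty_if_constant: "\<forall>x\<in>points n. f x = c \<Longrightarrow> relevant_vars n f = {}"
  unfolding relevant_vars_def by auto

lemma constant_if_relevant_vars_empty:
  assumes "relevant_vars n f = {}" "length x = n" "length y = n"
  shows "f x = f y"
  using assms(2)
proof (induction "card {i. i < n \<and> x ! i \<noteq> y ! i}" arbitrary: x rule: less_induct)
  case less
  let ?D = "\<lambda>x. {i. i < n \<and> x ! i \<noteq> y ! i}"
  show ?case
  proof (cases "?D x = {}")
    case True
    then have "x = y" using less.prems assms(3) by (intro nth_equalityI) auto
    then show ?thesis by simp
  next
    case False
    then obtain i where i: "i < n" "x ! i \<noteq> y ! i" by blast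
    let ?x = "x[i := y ! i]"
    have "?D ?x = ?D x - {i}"
      using less.prems by (auto split: if_split_asm)
    moreover have "card (?D x - {i}) < card (?D x)"
      by (rule card_Diff1_less) (use i in auto)
    ultimately have "card (?D ?x) < card (?D x)" by simp
    moreover have "length ?x = n" using less.prems by simp
    ultimately have "f ?x = f y" by (rule less.hyps)
    moreover have "f ?x = f x"
      by (rule update_irrelevant) (use assms(1) less.prems in auto)
    ultimately show ?thesis by simp
  qed
qed

lemma extremal_points_constant:
  assumes "\<forall>x\<in>points n. f x = c"
  shows "extremal_points n f = {replicate n (\<not> c)}"
proof (cases c)
  case True
  have "x = replicate n False" if "x \<in> min_ones n f" for x
  proof -
    have "length x = n" and "\<forall>y\<in>points n. f y \<and> leqB y x \<longrightarrow> y = x"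
      using that unfolding min_ones_def by simp_all
    moreover have "replicate n False \<in> points n" by simp
    ultimately have "replicate n False = x" using assms True by simp
    then show ?thesis by simp
  qed
  then have "min_ones n f = {replicate n False}"
    using assms True unfolding min_ones_def by auto
  moreover have "max_zeros n f = {}" using assms True unfolding max_zeros_def by simp
  ultimately show ?thesis unfolding extremal_points_def using True by simp
next
  case False
  have "x = replicate n True" if "x \<in> max_zeros n f" for x
  proof -
    have "length x = n" and "\<forall>y\<in>points n. \<not> f y \<and> leqB x y \<longrightarrow> y = x"
      using that unfolding max_zeros_def by simp_all
    moreover have "replicate n True \<in> points n" by simp
    ultimately have "replicate n True = x" using assms False by simp
    then show ?thesis by simp
  qed
  then have "max_zeros n f = {replicate n True}"
    using assms False unfolding max_zeros_def by auto
  moreover have "min_ones n f = {}" using assms False unfolding min_ones_def by simp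
  ultimately show ?thesis unfolding extremal_points_def using False by simp
qed

lemma card_extremal_points_if_relevant_vars_empty:
  assumes "relevant_vars n f = {}"
  shows "card (extremal_points n f) = 1"
proof -
  have "\<forall>x\<in>points n. f x = f (replicate n False)"
    using constant_if_relevant_vars_empty[OF assms] by (metis in_points_iff length_replicate)
  then have "extremal_points n f = {replicate n (\<not> f (replicate n False))}"
    by (rule extremal_points_constant)
  then show ?thesis by simp
qed

section \<open>Subfunctions and duality\<close>

text \<open>Unlike restrict, fix_var f j a keeps all \<open>n\<close> arguments and ignores
  the \<open>j\<close>-th one, so that a function and its subfunctions live on the same cube.\<close>

definition fix_var :: "(bool list \<Rightarrow> bool) \<Rightarrow> nat \<Rightarrow> bool \<Rightarrow> bool list \<Rightarrow> bool" where
  "fix_var f j a x = f (x[j := a])"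

lemma positive_fix_var:
  assumes "positive n f"
  shows "positive n (fix_var f j a)"
proof -
  have "f (y[j := a])" if "length x = n" "leqB x y" "f (x[j := a])" for x y
    using positiveD[OF assms _ leqB_update_mono] that by simp
  then show ?thesis unfolding positive_def fix_var_def by auto
qed

lemma relevant_vars_fix_var_subset: "relevant_vars n (fix_var f j a) \<subseteq> relevant_vars n f - {j}"
proof
  fix i assume "i \<in> relevant_vars n (fix_var f j a)"
  then obtain x where i: "i < n" and x: "length x = n"
    and ne: "f (x[i := False, j := a]) \<noteq> f (x[i := True, j := a])"
    unfolding relevant_vars_def fix_var_def by auto
  have "i \<noteq> j" using ne by (metis list_update_overwrite)
  then have "f ((x[j := a])[i := False]) \<noteq> f ((x[j := a])[i := True])"
    using ne by (simp add: list_update_swap)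
  then have "i \<in> relevant_vars n f"
    unfolding relevant_vars_def using i x by (auto intro!: exI[of _ "x[j := a]"])
  then show "i \<in> relevant_vars n f - {j}" using \<open>i \<noteq> j\<close> by simp
qed

definition dual :: "(bool list \<Rightarrow> bool) \<Rightarrow> bool list \<Rightarrow> bool" where
  "dual f x \<longleftrightarrow> \<not> f (map Not x)"

lemma map_Not_map_Not [simp]: "map Not (map Not x) = x"
  by (induction x) auto

lemma Not_comp_Not [simp]: "Not \<circ> Not = id"
  by auto

lemma map_Not_eq_iff [simp]: "map Not x = map Not y \<longleftrightarrow> x = y"
  by (metis map_Not_map_Not)

lemma in_image_map_Not_iff: "x \<in> map Not ` A \<longleftrightarrow> map Not x \<in> A"
  by (metis image_iff map_Not_map_Not)

lemma all_map_Not: "(\<forall>y. P y) \<longleftrightarrow> (\<forall>y. P (map Not y))"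
  by (metis map_Not_map_Not)

lemma ex_map_Not: "(\<exists>y. P y) \<longleftrightarrow> (\<exists>y. P (map Not y))"
  by (metis map_Not_map_Not)

lemma leqB_map_Not [simp]: "leqB (map Not x) (map Not y) \<longleftrightarrow> leqB y x"
  unfolding leqB_def by auto

lemma dual_dual [simp]: "dual (dual f) = f"
  unfolding dual_def by (simp add: comp_def)

lemma positive_dual:
  assumes "positive n f"
  shows "positive n (dual f)"
proof -
  have "dual f y" if "length x = n" "leqB x y" "dual f x" for x y
    using positiveD[OF assms, of "map Not y" "map Not x"] that by (auto simp: dual_def leqB_length)
  then show ?thesis unfolding positive_def by auto
qed

lemma leqB_map_Not_right: "leqB x (map Not y) \<longleftrightarrow> leqB y (map Not x)"
  using leqB_map_Not[of "map Not x" y] by simp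

lemma max_zeros_dual: "max_zeros n (dual f) = map Not ` min_ones n f"
proof -
  have "x \<in> max_zeros n (dual f) \<longleftrightarrow> map Not x \<in> min_ones n f" for x
  proof -
    have "(\<forall>y. length y = n \<longrightarrow> f y \<and> leqB y (map Not x) \<longrightarrow> y = map Not x) \<longleftrightarrow>
      (\<forall>y. length y = n \<longrightarrow> f (map Not y) \<and> leqB x y \<longrightarrow> y = x)"
    proof (intro iffI allI impI)
      fix y assume "\<forall>y. length y = n \<longrightarrow> f y \<and> leqB y (map Not x) \<longrightarrow> y = map Not x"
        and "length y = n" "f (map Not y) \<and> leqB x y"
      then show "y = x" by (auto dest: spec[of _ "map Not y"])
    next
      fix y assume "\<forall>y. length y = n \<longrightarrow> f (map Not y) \<and> leqB x y \<longrightarrow> y = x"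
        and "length y = n" "f y \<and> leqB y (map Not x)"
      then show "y = map Not x" by (auto dest: spec[of _ "map Not y"] simp: leqB_map_Not_right)
    qed
    then show ?thesis by (simp add: max_zeros_def min_ones_def dual_def)
  qed
  then show ?thesis unfolding set_eq_iff in_image_map_Not_iff by blast
qed

lemma min_ones_dual: "min_ones n (dual f) = map Not ` max_zeros n f"
  using max_zeros_dual[of n "dual f"] unfolding set_eq_iff in_image_map_Not_iff by simp

lemma card_extremal_points_dual: "card (extremal_points n (dual f)) = card (extremal_points n f)"
proof -
  have "inj_on (map Not) A" for A by (simp add: inj_on_def)
  then show ?thesis
    unfolding card_extremal_points max_zeros_dual min_ones_dual by (simp add: card_image)
qed

lemma relevant_vars_dual: "relevant_vars n (dual f) = relevant_vars n f"
proof -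
  have "(\<exists>x. length x = n \<and> dual f (x[i := False]) \<noteq> dual f (x[i := True])) \<longleftrightarrow>
        (\<exists>x. length x = n \<and> f (x[i := False]) \<noteq> f (x[i := True]))" for i
    by (subst ex_map_Not) (auto simp: dual_def map_update)
  then show ?thesis unfolding relevant_vars_def by simp
qed

lemma fix_var_dual: "fix_var (dual f) j a = dual (fix_var f j (\<not> a))"
  unfolding fix_var_def dual_def by (simp add: map_update)

section \<open>Canalyzing variables\<close>

definition canalyzes :: "nat \<Rightarrow> (bool list \<Rightarrow> bool) \<Rightarrow> nat \<Rightarrow> bool \<Rightarrow> bool" where
  "canalyzes n f j c \<longleftrightarrow> j < n \<and> (\<forall>x\<in>points n. f (x[j := c]) = c)"

lemma canalyzes_dual: "canalyzes n (dual f) j c \<longleftrightarrow> canalyzes n f j (\<not> c)"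
proof -
  have "(\<forall>x. length x = n \<longrightarrow> dual f (x[j := c]) = c) \<longleftrightarrow>
        (\<forall>x. length x = n \<longrightarrow> f (x[j := \<not> c]) = (\<not> c))"
    by (subst all_map_Not) (auto simp: dual_def map_update)
  then show ?thesis unfolding canalyzes_def by simp
qed

lemma canalyzesD: "canalyzes n f j c \<Longrightarrow> length x = n \<Longrightarrow> f (x[j := c]) = c"
  unfolding canalyzes_def by simp

text \<open>A positive function can only force the value of its fixed input: \<open>f(x[j:=0]) = 1\<close>
  or \<open>f(x[j:=1]) = 0\<close> for all \<open>x\<close> already makes \<open>f\<close> constant.\<close>

lemma forced_value_eq_input:
  assumes pos: "positive n f" and forced: "\<forall>x\<in>points n. f (x[j := a]) = c"
    and rel: "relevant_vars n f \<noteq> {}"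
  shows "c = a"
proof (rule ccontr)
  assume "c \<noteq> a"
  have "f x = c" if "length x = n" for x
  proof (cases a)
    case True
    then show ?thesis using \<open>c \<noteq> a\<close> forced that positiveD[OF pos that leqB_update_True, of j]
      by auto
  next
    case False
    then show ?thesis using \<open>c \<noteq> a\<close> forced that positiveD[OF pos _ leqB_update_False, of x j]
      by auto
  qed
  then show False using rel relevant_vars_empty_if_constant[of n f c] by simp
qed

lemma min_ones_fix_var_nth:
  assumes "t \<in> min_ones n (fix_var f j a)" "j < n"
  shows "\<not> t ! j"
proof -
  have "fix_var f j a (t[j := False])" "length t = n"
    using assms unfolding min_ones_def fix_var_def by simp_all
  then have "t[j := False] = t" using assms(1) unfolding min_ones_def by simp
  then show ?thesis using assms(2) \<open>length t = n\<close> nth_list_update_eq[of j t False] by simp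
qed

lemma max_zeros_fix_var_nth:
  assumes "z \<in> max_zeros n (fix_var f j a)" "j < n"
  shows "z ! j"
proof -
  have "\<not> fix_var f j a (z[j := True])" "length z = n"
    using assms unfolding max_zeros_def fix_var_def by simp_all
  then have "z[j := True] = z" using assms(1) unfolding max_zeros_def by simp
  then show ?thesis using assms(2) \<open>length z = n\<close> nth_list_update_eq[of j z True] by simp
qed

lemma min_ones_fix_var_False:
  assumes "j < n"
  shows "min_ones n (fix_var f j False) = {t \<in> min_ones n f. \<not> t ! j}"
proof (intro equalityI subsetI)
  fix t assume t: "t \<in> min_ones n (fix_var f j False)"
  then have tj: "\<not> t ! j" using min_ones_fix_var_nth assms by blast
  then have tt: "t[j := False] = t" by simp
  have "y = t" if "length y = n" "f y" "leqB y t" for y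
  proof -
    have "\<not> y ! j" using leqB_nthD[OF that(3), of j] tj that(1) assms by auto
    then have "fix_var f j False y" using that unfolding fix_var_def by simp
    then show ?thesis using t that unfolding min_ones_def by simp
  qed
  then show "t \<in> {t \<in> min_ones n f. \<not> t ! j}"
    using t tj tt unfolding min_ones_def fix_var_def by auto
next
  fix t assume t: "t \<in> {t \<in> min_ones n f. \<not> t ! j}"
  then have tt: "t[j := False] = t" by simp
  have "y = t" if "length y = n" "fix_var f j False y" "leqB y t" for y
  proof -
    have "leqB (y[j := False]) t" using that(3) leqB_update_False leqB_trans by blast
    then have "y[j := False] = t" using t that unfolding min_ones_def fix_var_def by simp
    moreover have "\<not> y ! j" using leqB_nthD[OF that(3), of j] t that(1) assms by auto
    ultimately show ?thesis by simp
  qed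
  then show "t \<in> min_ones n (fix_var f j False)"
    using t tt unfolding min_ones_def fix_var_def by auto
qed

lemma max_zeros_fix_var_True:
  assumes "j < n"
  shows "max_zeros n (fix_var f j True) = {z \<in> max_zeros n f. z ! j}"
proof (intro equalityI subsetI)
  fix z assume z: "z \<in> max_zeros n (fix_var f j True)"
  then have zj: "z ! j" using max_zeros_fix_var_nth assms by blast
  then have zz: "z[j := True] = z" by simp
  have "y = z" if "length y = n" "\<not> f y" "leqB z y" for y
  proof -
    have "y ! j" using leqB_nthD[OF that(3) _ zj] leqB_length[OF that(3)] that(1) assms by simp
    then have "\<not> fix_var f j True y" using that unfolding fix_var_def by simp
    then show ?thesis using z that unfolding max_zeros_def by simp
  qed
  then show "z \<in> {z \<in> max_zeros n f. z ! j}"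
    using z zj zz unfolding max_zeros_def fix_var_def by auto
next
  fix z assume z: "z \<in> {z \<in> max_zeros n f. z ! j}"
  then have zz: "z[j := True] = z" by simp
  have "y = z" if "length y = n" "\<not> fix_var f j True y" "leqB z y" for y
  proof -
    have "leqB z (y[j := True])" using that(3) leqB_update_True leqB_trans by blast
    then have "y[j := True] = z" using z that unfolding max_zeros_def fix_var_def by simp
    moreover have "y ! j"
      using leqB_nthD[OF that(3), of j] leqB_length[OF that(3)] that(1) z assms by auto
    ultimately show ?thesis by simp
  qed
  then show "z \<in> max_zeros n (fix_var f j True)"
    using z zz unfolding max_zeros_def fix_var_def by auto
qed

lemma leqB_unit_vector:
  assumes "leqB y ((replicate n False)[j := True])"
  shows "y = (replicate n False)[j := True] \<or> y = replicate n False"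
proof -
  have "y = (replicate n False)[j := y ! j]"
    using assms by (intro nth_equalityI) (auto simp: leqB_def)
  moreover have "(replicate n False)[j := False] = replicate n False"
    by (cases "j < n") (simp_all add: list_update_beyond)
  ultimately show ?thesis by (cases "y ! j") auto
qed

lemma min_ones_canalyzes_True:
  assumes pos: "positive n f" and can: "canalyzes n f j True" and nz: "\<not> f (replicate n False)"
  shows "min_ones n f = insert ((replicate n False)[j := True]) (min_ones n (fix_var f j False))"
proof -
  let ?u = "(replicate n False)[j := True]"
  have j: "j < n" using can unfolding canalyzes_def by simp
  have fu: "f ?u" using can unfolding canalyzes_def by simp
  have "y = ?u" if "length y = n" "f y" "leqB y ?u" for y
    using leqB_unit_vector[OF that(3)] that(2) nz by auto
  then have "?u \<in> min_ones n f" using fu unfolding min_ones_def by simp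
  moreover have "t = ?u" if "t \<in> min_ones n f" "t ! j" for t
  proof -
    have "length t = n" and "\<forall>y\<in>points n. f y \<and> leqB y t \<longrightarrow> y = t"
      using that(1) unfolding min_ones_def by simp_all
    moreover have "leqB ?u t" using that(2) \<open>length t = n\<close> by (auto simp: leqB_def)
    moreover have "?u \<in> points n" by simp
    ultimately have "?u = t" using fu by simp
    then show ?thesis by simp
  qed
  moreover have "?u ! j" using j by simp
  ultimately have "min_ones n f = insert ?u {t \<in> min_ones n f. \<not> t ! j}" by blast
  then show ?thesis using min_ones_fix_var_False[OF j, of f] by simp
qed

lemma not_nth_if_canalyzes_True:
  assumes "canalyzes n f j True" "length z = n" "\<not> f z"
  shows "\<not> z ! j"
  using canalyzesD[OF assms(1,2)] assms(3) by auto

lemma update_True_in_max_zeros_fix_False: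
  assumes can: "canalyzes n f j True" and z: "z \<in> max_zeros n f"
  shows "z[j := True] \<in> max_zeros n (fix_var f j False)"
proof -
  have j: "j < n" using can unfolding canalyzes_def by simp
  have zj: "\<not> z ! j" using not_nth_if_canalyzes_True[OF can] z unfolding max_zeros_def by simp
  have "y = z[j := True]" if "length y = n" "\<not> fix_var f j False y" "leqB (z[j := True]) y" for y
  proof -
    have "leqB z (y[j := False])" using that(3) zj by (auto simp: leqB_def)
    then have "y[j := False] = z" using z that unfolding max_zeros_def fix_var_def by simp
    then have "z[j := True] = y[j := True]" by auto
    moreover have "y ! j"
      using leqB_nthD[OF that(3), of j] that(1) j leqB_length[OF that(3)] by simp
    ultimately show ?thesis by simp
  qed
  moreover have "\<not> fix_var f j False (z[j := True])"
    using z zj unfolding max_zeros_def fix_var_def by simp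
  ultimately show ?thesis using z unfolding max_zeros_def by simp
qed

lemma update_False_in_max_zeros:
  assumes can: "canalyzes n f j True" and w: "w \<in> max_zeros n (fix_var f j False)"
  shows "w[j := False] \<in> max_zeros n f"
proof -
  have "y = w[j := False]" if "length y = n" "\<not> f y" "leqB (w[j := False]) y" for y
  proof -
    have yj: "\<not> y ! j" using not_nth_if_canalyzes_True[OF can that(1,2)] .
    then have "leqB w (y[j := True])" using that(3) by (auto simp: leqB_def)
    moreover have "\<not> fix_var f j False (y[j := True])" using that yj unfolding fix_var_def by simp
    ultimately have "y[j := True] = w" using w that unfolding max_zeros_def by simp
    then have "w[j := False] = y[j := False]" by auto
    then show ?thesis using yj by simp
  qed
  then show ?thesis using w unfolding max_zeros_def fix_var_def by simp
qed

lemma card_max_zeros_canalyzes_True: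
  assumes can: "canalyzes n f j True"
  shows "card (max_zeros n (fix_var f j False)) = card (max_zeros n f)"
proof -
  have "z[j := True, j := False] = z" if "z \<in> max_zeros n f" for z
    using not_nth_if_canalyzes_True[OF can] that unfolding max_zeros_def by simp
  moreover have "w[j := False, j := True] = w" if "w \<in> max_zeros n (fix_var f j False)" for w
    using max_zeros_fix_var_nth[OF that] can unfolding canalyzes_def by simp
  ultimately have "bij_betw (\<lambda>z. z[j := True]) (max_zeros n f) (max_zeros n (fix_var f j False))"
    using update_True_in_max_zeros_fix_False[OF can] update_False_in_max_zeros[OF can]
    by (intro bij_betw_byWitness[where f' = "\<lambda>w. w[j := False]"]) auto
  then show ?thesis by (simp add: bij_betw_same_card)
qed

lemma relevant_vars_canalyzes_True:
  assumes can: "canalyzes n f j True" and nz: "length x0 = n" "\<not> f (x0[j := False])"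
  shows "relevant_vars n f = insert j (relevant_vars n (fix_var f j False))"
proof -
  let ?g = "fix_var f j False"
  have j: "j < n" using can unfolding canalyzes_def by simp
  have "j \<in> relevant_vars n f"
    using j nz canalyzesD[OF can nz(1)] unfolding relevant_vars_def by auto
  moreover have "l \<in> relevant_vars n ?g" if l: "l \<in> relevant_vars n f" "l \<noteq> j" for l
  proof -
    obtain x where x: "length x = n" "l < n" and ne: "f (x[l := False]) \<noteq> f (x[l := True])"
      using l(1) unfolding relevant_vars_def by auto
    have xl: "(x[l := a]) ! j = x ! j" for a using l(2) j x by simp
    have "\<not> x ! j"
    proof
      assume "x ! j"
      then have "f (x[l := a])" for a using canalyzesD[OF can, of "x[l := a]"] xl x by simp
      then show False using ne by simp
    qed
    then have "?g (x[l := a]) = f (x[l := a])" for a using xl unfolding fix_var_def by simp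
    then show ?thesis using x ne unfolding relevant_vars_def by auto
  qed
  ultimately show ?thesis using relevant_vars_fix_var_subset[of n f j False] by blast
qed

lemma card_extremal_points_relevant_vars_canalyzes_True:
  assumes pos: "positive n f" and can: "canalyzes n f j True" and rel: "relevant_vars n f \<noteq> {}"
  shows "card (extremal_points n f) = card (extremal_points n (fix_var f j False)) + 1 \<and>
    relevant_vars n f = insert j (relevant_vars n (fix_var f j False))"
proof -
  let ?g = "fix_var f j False" and ?u = "(replicate n False)[j := True]"
  have j: "j < n" using can unfolding canalyzes_def by simp
  have "\<exists>x0. length x0 = n \<and> \<not> f (x0[j := False])"
  proof (rule ccontr)
    assume none: "\<not> ?thesis"
    have "f x" if "length x = n" for x
    proof -
      have "f (x[j := False])" "f (x[j := True])" using none that canalyzesD[OF can that] by auto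
      then show ?thesis by (cases "x ! j") simp_all
    qed
    then show False using rel relevant_vars_empty_if_constant[of n f True] by simp
  qed
  then obtain x0 where x0: "length x0 = n" "\<not> f (x0[j := False])" by blast
  then have "\<not> f (replicate n False)"
    using positiveD[OF pos, of "replicate n False" "x0[j := False]"] by auto
  then have "min_ones n f = insert ?u (min_ones n ?g)" by (rule min_ones_canalyzes_True[OF pos can])
  moreover have "?u \<notin> min_ones n ?g" using min_ones_fix_var_nth[of ?u n f j False] j by auto
  moreover have "finite (min_ones n ?g)" unfolding min_ones_def by simp
  ultimately have "card (min_ones n f) = card (min_ones n ?g) + 1" by simp
  then show ?thesis
    using card_max_zeros_canalyzes_True[OF can] relevant_vars_canalyzes_True[OF can x0]
    by (simp add: card_extremal_points)
qed

lemma card_extremal_points_relevant_vars_canalyzes: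
  assumes pos: "positive n f" and can: "canalyzes n f j c" and rel: "relevant_vars n f \<noteq> {}"
  shows "card (extremal_points n f) = card (extremal_points n (fix_var f j (\<not> c))) + 1 \<and>
    relevant_vars n f = insert j (relevant_vars n (fix_var f j (\<not> c)))"
proof (cases c)
  case True
  then show ?thesis using card_extremal_points_relevant_vars_canalyzes_True[OF pos] can rel by simp
next
  case False
  then have "canalyzes n (dual f) j True" using can by (simp add: canalyzes_dual)
  then show ?thesis
    using card_extremal_points_relevant_vars_canalyzes_True[OF positive_dual[OF pos]] rel False
    by (simp add: fix_var_dual card_extremal_points_dual relevant_vars_dual)
qed

lemma card_extremal_points_if_forcing:
  assumes pos: "positive n f" and j: "j < n" and forced: "\<forall>x\<in>points n. f (x[j := a]) = c"
    and tight: "card (extremal_points n (fix_var f j (\<not> a))) =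
      card (relevant_vars n (fix_var f j (\<not> a))) + 1"
  shows "card (extremal_points n f) = card (relevant_vars n f) + 1"
proof (cases "relevant_vars n f = {}")
  case True
  then show ?thesis by (simp add: card_extremal_points_if_relevant_vars_empty)
next
  case False
  then have "canalyzes n f j a"
    using forced_value_eq_input[OF pos forced] forced j unfolding canalyzes_def by simp
  then have "card (extremal_points n f) = card (extremal_points n (fix_var f j (\<not> a))) + 1"
    and rel: "relevant_vars n f = insert j (relevant_vars n (fix_var f j (\<not> a)))"
    using card_extremal_points_relevant_vars_canalyzes[OF pos _ False] by blast+
  moreover have "j \<notin> relevant_vars n (fix_var f j (\<not> a))"
    using relevant_vars_fix_var_subset by blast
  ultimately show ?thesis using tight by simp
qed

section \<open>A variable whose fixing keeps all other variables relevant\<close>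

definition dominates :: "nat \<Rightarrow> (bool list \<Rightarrow> bool) \<Rightarrow> nat \<Rightarrow> nat \<Rightarrow> bool" where
  "dominates n f a b \<longleftrightarrow> (\<forall>x\<in>points n. f (x[b := True, a := False]) \<longrightarrow> f (x[b := False, a := True]))"

definition weight :: "nat \<Rightarrow> (bool list \<Rightarrow> bool) \<Rightarrow> nat \<Rightarrow> nat" where
  "weight n f a = card {x \<in> points n. f x \<and> x ! a}"

lemma fix_var_irrelevant:
  assumes "l \<notin> relevant_vars n (fix_var f j a)" "length x = n"
  shows "f (x[l := b, j := a]) = f (x[j := a])"
  using update_irrelevant[OF assms] unfolding fix_var_def .

lemma dominates_if_irrelevant_fix_True:
  assumes pos: "positive n f" and l: "l \<notin> relevant_vars n (fix_var f j True)"
  shows "dominates n f j l"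
  unfolding dominates_def
proof (intro ballI impI)
  fix x assume x: "x \<in> points n" and "f (x[l := True, j := False])"
  then have "f (x[l := True, j := True])"
    using positiveD[OF pos, of "x[l := True, j := False]" "x[l := True, j := True]"]
    by (simp add: leqB_def)
  then show "f (x[l := False, j := True])" using fix_var_irrelevant[OF l] x by simp
qed

lemma weight_split:
  "weight n f a =
    card {x \<in> points n. f x \<and> x ! a \<and> x ! b} + card {x \<in> points n. f x \<and> x ! a \<and> \<not> x ! b}"
proof -
  have "{x \<in> points n. f x \<and> x ! a} =
      {x \<in> points n. f x \<and> x ! a \<and> x ! b} \<union> {x \<in> points n. f x \<and> x ! a \<and> \<not> x ! b}"
    by auto
  then show ?thesis unfolding weight_def by (simp add: card_Un_disjoint disjoint_iff)
qed

text \<open>Moving a one from \<open>b\<close> to \<open>a\<close> injects the true points with \<open>x\<^sub>b > x\<^sub>a\<close> into those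
  with \<open>x\<^sub>a > x\<^sub>b\<close>; if the weights agree, this injection is onto, which is the reverse dominance.\<close>

lemma weight_le_if_dominates:
  assumes d: "dominates n f a b" and ab: "a \<noteq> b" "a < n" "b < n"
  shows "weight n f b \<le> weight n f a \<and> (weight n f b = weight n f a \<longrightarrow> dominates n f b a)"
proof -
  let ?Sb = "{x \<in> points n. f x \<and> x ! b \<and> \<not> x ! a}"
  let ?Sa = "{x \<in> points n. f x \<and> x ! a \<and> \<not> x ! b}"
  define \<sigma> where "\<sigma> x = x[a := True, b := False]" for x :: "bool list"
  have swap: "(x[a := c, b := d])[a := c', b := d'] = x[a := c', b := d']" for x c d c' d'
    using ab by (simp add: list_update_swap)
  have "{x \<in> points n. f x \<and> x ! b \<and> x ! a} = {x \<in> points n. f x \<and> x ! a \<and> x ! b}" by auto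
  then have weights: "weight n f a + card ?Sb = weight n f b + card ?Sa"
    using weight_split[of n f a b] weight_split[of n f b a] by simp
  have swap_back: "x[a := False, b := True] = x" if "x \<in> ?Sb" for x using that by simp
  have inj: "inj_on \<sigma> ?Sb"
  proof (rule inj_onI)
    fix x y assume "x \<in> ?Sb" "y \<in> ?Sb" "\<sigma> x = \<sigma> y"
    then have "(\<sigma> x)[a := False, b := True] = (\<sigma> y)[a := False, b := True]" by simp
    then show "x = y" using swap_back \<open>x \<in> ?Sb\<close> \<open>y \<in> ?Sb\<close> unfolding \<sigma>_def swap by simp
  qed
  have sub: "\<sigma> ` ?Sb \<subseteq> ?Sa"
  proof
    fix y assume "y \<in> \<sigma> ` ?Sb"
    then obtain x where x: "x \<in> ?Sb" and y: "y = \<sigma> x" by blast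
    have "x[b := True, a := False] = x" using x by simp
    then have "f (x[b := False, a := True])"
      using d[unfolded dominates_def, rule_format, of x] x by simp
    then show "y \<in> ?Sa" using x ab unfolding y \<sigma>_def by (simp add: list_update_swap)
  qed
  have le: "card ?Sb \<le> card ?Sa"
    using card_image[OF inj] card_mono[OF _ sub] by simp
  have "dominates n f b a" if eq: "weight n f b = weight n f a"
  proof -
    have "card (\<sigma> ` ?Sb) = card ?Sa" using eq weights le card_image[OF inj] by simp
    then have im: "\<sigma> ` ?Sb = ?Sa" using card_subset_eq[OF _ sub] by simp
    show ?thesis unfolding dominates_def
    proof (intro ballI impI)
      fix x assume x: "x \<in> points n" and fx: "f (x[a := True, b := False])"
      then have "x[a := True, b := False] \<in> ?Sa" using ab by simp
      then obtain w where w: "w \<in> ?Sb" and "x[a := True, b := False] = \<sigma> w" using im by blast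
      then have "(x[a := True, b := False])[a := False, b := True] =
          w[a := True, b := False, a := False, b := True]"
        unfolding \<sigma>_def by simp
      then have "x[a := False, b := True] = w" using swap_back[OF w] unfolding swap by simp
      then show "f (x[a := False, b := True])" using w by simp
    qed
  qed
  then show ?thesis using weights le by simp
qed

lemma relevant_vars_subset_fix_var:
  "relevant_vars n f \<subseteq>
    insert j (relevant_vars n (fix_var f j True) \<union> relevant_vars n (fix_var f j False))"
proof
  fix l assume "l \<in> relevant_vars n f"
  then obtain x where x: "length x = n" "l < n" and ne: "f (x[l := False]) \<noteq> f (x[l := True])"
    unfolding relevant_vars_def by auto
  show "l \<in> insert j (relevant_vars n (fix_var f j True) \<union> relevant_vars n (fix_var f j False))"
  proof (rule ccontr)
    assume "\<not> ?thesis"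
    then have "l \<noteq> j" and irr: "l \<notin> relevant_vars n (fix_var f j a)" for a by (cases a; simp)+
    then have "f (x[l := b]) = f (x[j := x ! j])" for b
      using fix_var_irrelevant[OF irr[of "x ! j"] x(1), of b] \<open>l \<noteq> j\<close> by simp
    then show False using ne by simp
  qed
qed

text \<open>The three hypotheses pin the subfunction \<open>f|x\<^sub>j=1\<close> down on all four values of
  \<open>(x\<^sub>l, x\<^sub>l')\<close>: along \<open>x\<^sub>l = 0\<close> by the symmetry in \<open>x\<^sub>j, x\<^sub>l\<close> and the
  irrelevance of \<open>x\<^sub>l'\<close> for \<open>x\<^sub>j = 0\<close>, and along \<open>x\<^sub>l = 1\<close> by the irrelevance of \<open>x\<^sub>l\<close>.\<close>

lemma irrelevant_fix_True_if_symmetric: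
  assumes d: "j \<noteq> l" "j \<noteq> l'" "l \<noteq> l'"
    and U: "l \<notin> relevant_vars n (fix_var f j True)"
    and L: "l' \<notin> relevant_vars n (fix_var f j False)"
    and E: "\<forall>y\<in>points n. f (y[l := True, j := False]) = f (y[l := False, j := True])"
  shows "l' \<notin> relevant_vars n (fix_var f j True)"
proof -
  have "f (x[l' := False, j := True]) = f (x[l' := True, j := True])" if x: "length x = n" for x
  proof -
    define g where "g a b c = f (x[j := a, l := b, l' := c])" for a b c
    have reorder: "x[l' := c, l := b, j := a] = x[j := a, l := b, l' := c]"
      "x[l := b, l' := c, j := a] = x[j := a, l := b, l' := c]" for a b c
      using d by (simp_all add: list_update_swap)
    have U': "g True b c = g True b' c" for b b' c
      using fix_var_irrelevant[OF U, of "x[l' := c]" b] fix_var_irrelevant[OF U, of "x[l' := c]" b']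
        x
      unfolding g_def reorder by simp
    have E': "g False True c = g True False c" for c
      using E[rule_format, of "x[l' := c]"] x unfolding g_def reorder by simp
    have L': "g False b c = g False b c'" for b c c'
      using fix_var_irrelevant[OF L, of "x[l := b]" c] fix_var_irrelevant[OF L, of "x[l := b]" c']
        x
      unfolding g_def reorder by simp
    have "g True b False = g True False False" for b by (rule U')
    also have "g True False False = g True False True"
      using E'[of False] E'[of True] L'[of True False True] by simp
    also have "g True False True = g True b True" for b by (rule U')
    finally have "g True b False = g True b True" for b .
    moreover have "x[j := True, l := x ! l, l' := c] = x[l' := c, j := True]" for c
      using d by (simp add: list_update_swap)
    ultimately show ?thesis unfolding g_def by metis
  qed
  then show ?thesis unfolding relevant_vars_def fix_var_def by auto
qed

text \<open>Take a relevant variable \<open>x\<^sub>j\<close> of least weight. If fixing \<open>x\<^sub>j = 1\<close> kills a relevant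
  \<open>x\<^sub>l\<close>, then \<open>x\<^sub>j\<close> dominates \<open>x\<^sub>l\<close>, and minimality forces \<open>f\<close> to be symmetric in \<open>x\<^sub>j, x\<^sub>l\<close>;
  if moreover fixing \<open>x\<^sub>j = 0\<close> kills some \<open>x\<^sub>l'\<close>, then \<open>x\<^sub>l'\<close> is irrelevant in both subfunctions,
  hence in \<open>f\<close>.\<close>

lemma exists_relevant_var_fix_var_keeps_relevant_vars:
  assumes pos: "positive n f" and ne: "relevant_vars n f \<noteq> {}"
  obtains j a where "j \<in> relevant_vars n f"
    and "relevant_vars n (fix_var f j a) = relevant_vars n f - {j}"
proof -
  let ?V = "relevant_vars n f"
  obtain j where jV: "j \<in> ?V" and jmin: "\<And>l. l \<in> ?V \<Longrightarrow> weight n f j \<le> weight n f l"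
    using ex_is_arg_min_if_finite[OF finite_relevant_vars ne, of "weight n f"]
    unfolding is_arg_min_linorder by blast
  have "\<exists>a. relevant_vars n (fix_var f j a) = ?V - {j}"
  proof (rule ccontr)
    assume "\<not> ?thesis"
    then obtain l l' where l: "l \<in> ?V" "l \<noteq> j" "l \<notin> relevant_vars n (fix_var f j True)"
      and l': "l' \<in> ?V" "l' \<noteq> j" "l' \<notin> relevant_vars n (fix_var f j False)"
      using relevant_vars_fix_var_subset[of n f j] by blast
    have n: "j < n" "l < n" using jV l(1) relevant_vars_subset by auto
    have "dominates n f j l" using dominates_if_irrelevant_fix_True[OF pos l(3)] .
    moreover have "weight n f j \<le> weight n f l" using jmin l(1) .
    ultimately have "dominates n f l j"
      using weight_le_if_dominates[of n f j l] l(2) n by simp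
    with \<open>dominates n f j l\<close> have E:
      "\<forall>x\<in>points n. f (x[l := True, j := False]) = f (x[l := False, j := True])"
      using l(2) unfolding dominates_def by (auto simp: list_update_swap)
    have "l' \<notin> relevant_vars n (fix_var f j True)"
    proof (cases "l = l'")
      case True
      then show ?thesis using l by simp
    next
      case False
      then show ?thesis
        using irrelevant_fix_True_if_symmetric[OF _ _ _ l(3) l'(3) E] l(2) l'(2) by auto
    qed
    then show False using relevant_vars_subset_fix_var[of n f j] l' by blast
  qed
  then show thesis using that jV by blast
qed

section \<open>The lower bound and its equality case\<close>

lemma min_one_of_min_one_fix_True:
  assumes pos: "positive n f" and j: "j < n" and s: "s \<in> min_ones n (fix_var f j True)"
  shows "(if f s then s else s[j := True]) \<in> min_ones n f"
proof -
  have sj: "\<not> s ! j" using min_ones_fix_var_nth[OF s j] .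
  have len: "length s = n" and fs: "f (s[j := True])"
    and min: "\<And>y. length y = n \<Longrightarrow> f (y[j := True]) \<Longrightarrow> leqB y s \<Longrightarrow> y = s"
    using s unfolding min_ones_def fix_var_def by auto
  show ?thesis
  proof (cases "f s")
    case True
    have "y = s" if "length y = n" "f y" "leqB y s" for y
      using min[OF that(1) _ that(3)] positiveD[OF pos that(1) leqB_update_True that(2)] by simp
    then show ?thesis using True len unfolding min_ones_def by auto
  next
    case False
    have "y = s[j := True]" if y: "length y = n" "f y" "leqB y (s[j := True])" for y
    proof (cases "y ! j")
      case True
      have "leqB (y[j := False]) s" using y(3) by (simp add: leqB_update_False_iff)
      then have "y[j := False] = s" using min[of "y[j := False]"] y True by simp
      then have "y[j := False, j := True] = s[j := True]" by simp
      then show ?thesis using True by simp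
    next
      case False
      then have "leqB y s" using y(3) leqB_update_False_iff[of y j s] by simp
      then show ?thesis using positiveD[OF pos y(1) _ y(2)] \<open>\<not> f s\<close> by simp
    qed
    then show ?thesis using False len fs unfolding min_ones_def by auto
  qed
qed

lemma card_min_ones_fix_True_le:
  assumes pos: "positive n f" and j: "j < n"
  shows "card (min_ones n (fix_var f j True)) +
    card {t \<in> min_ones n f. \<not> t ! j \<and> t \<notin> min_ones n (fix_var f j True)} \<le> card (min_ones n f)"
proof -
  let ?T = "min_ones n (fix_var f j True)"
  let ?K = "{t \<in> min_ones n f. \<not> t ! j \<and> t \<notin> ?T}"
  define \<iota> where "\<iota> s = (if f s then s else s[j := True])" for s
  have img: "\<iota> ` ?T \<subseteq> min_ones n f"
    unfolding \<iota>_def using min_one_of_min_one_fix_True[OF pos j] by blast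
  have nth: "\<not> s ! j" "length s = n" if "s \<in> ?T" for s
    using min_ones_fix_var_nth[OF that j] that unfolding min_ones_def by simp_all
  have inj: "inj_on \<iota> ?T"
  proof (rule inj_onI)
    fix s s' assume s: "s \<in> ?T" and s': "s' \<in> ?T" and eq: "\<iota> s = \<iota> s'"
    then have "(\<iota> s)[j := False] = (\<iota> s')[j := False]" by simp
    then show "s = s'" using nth[OF s] nth[OF s'] unfolding \<iota>_def by (simp split: if_splits)
  qed
  have disj: "\<iota> ` ?T \<inter> ?K = {}"
    using nth j unfolding \<iota>_def by auto
  have "finite (min_ones n f)" unfolding min_ones_def by simp
  then have "card (\<iota> ` ?T \<union> ?K) \<le> card (min_ones n f)"
    using img by (intro card_mono) auto
  moreover have "card (\<iota> ` ?T \<union> ?K) = card ?T + card ?K"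
    using card_Un_disjoint[OF _ _ disj] card_image[OF inj] \<open>finite (min_ones n f)\<close> img
    by (metis (no_types, lifting) finite_subset mem_Collect_eq subsetI)
  ultimately show ?thesis by simp
qed

lemma card_max_zeros_split:
  assumes "j < n"
  shows "card (max_zeros n f) =
    card (max_zeros n (fix_var f j True)) + card {z \<in> max_zeros n f. \<not> z ! j}"
proof -
  have "finite (max_zeros n f)" unfolding max_zeros_def by simp
  moreover have "max_zeros n f = {z \<in> max_zeros n f. z ! j} \<union> {z \<in> max_zeros n f. \<not> z ! j}" by auto
  ultimately show ?thesis
    unfolding max_zeros_fix_var_True[OF assms] by (metis (no_types, lifting) card_Un_disjoint
      disjoint_iff finite_Un mem_Collect_eq)
qed

lemma exists_max_zero_off_relevant_var:
  assumes pos: "positive n f" and j: "j \<in> relevant_vars n f"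
  shows "{z \<in> max_zeros n f. \<not> z ! j} \<noteq> {}"
proof -
  obtain x where x: "length x = n" "f (x[j := False]) \<noteq> f (x[j := True])"
    using j unfolding relevant_vars_def by auto
  then have a: "\<not> f (x[j := False])" "f (x[j := True])"
    using positive_update[OF pos x(1)] by auto
  obtain z where z: "z \<in> max_zeros n f" "leqB (x[j := False]) z"
    using exists_max_zero_above[of "x[j := False]" n f] a x by auto
  have "\<not> z ! j"
  proof
    assume "z ! j"
    then have "leqB (x[j := True]) z" using z(2) by (auto simp: leqB_def)
    then have "f z" using positiveD[OF pos _ _ a(2)] x by simp
    then show False using z unfolding max_zeros_def by simp
  qed
  then show ?thesis using z by auto
qed

lemma canalyzes_if_zeros_of_face_below:
  assumes pos: "positive n f" and j: "j < n" and z0: "length z0 = n" "\<not> f z0"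
    and below: "\<And>x. length x = n \<Longrightarrow> \<not> f x \<Longrightarrow> \<not> x ! j \<Longrightarrow> leqB x z0"
  shows "\<exists>q c. canalyzes n f q c"
proof (cases "\<forall>i<n. i \<noteq> j \<longrightarrow> z0 ! i")
  case True
  have "\<not> f (x[j := False])" if x: "length x = n" for x
  proof
    assume "f (x[j := False])"
    moreover have "leqB (x[j := False]) z0" using True x z0 by (auto simp: leqB_def)
    ultimately show False using positiveD[OF pos, of "x[j := False]" z0] x z0 by simp
  qed
  then show ?thesis using j unfolding canalyzes_def by auto
next
  case False
  then obtain p where p: "p < n" "p \<noteq> j" "\<not> z0 ! p" by blast
  have "f (y[p := True])" if y: "length y = n" for y
  proof (rule ccontr)
    assume "\<not> f (y[p := True])"
    then have "\<not> f (y[p := True, j := False])"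
      using positiveD[OF pos, of "y[p := True, j := False]" "y[p := True]"] y by auto
    then have "leqB (y[p := True, j := False]) z0" by (rule below[rotated]) (use y j in simp_all)
    then show False using leqB_nthD[of "y[p := True, j := False]" z0 p] p y by simp
  qed
  then show ?thesis using p unfolding canalyzes_def by auto
qed

lemma update_False_if_update_True:
  assumes pos: "positive n f" and j: "j < n" and q: "q < n" "q \<noteq> j"
    and nfu: "\<not> f ((replicate n False)[q := True])"
    and f1u: "fix_var f j True ((replicate n False)[q := True])"
    and K: "\<And>t. t \<in> min_ones n f \<Longrightarrow> \<not> t ! j \<Longrightarrow> t \<in> min_ones n (fix_var f j True)"
    and x: "length x = n" "\<not> x ! j" "f (x[q := True])"
  shows "f (x[q := False])"
proof (rule ccontr)
  let ?u = "(replicate n False)[q := True]"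
  assume nf: "\<not> f (x[q := False])"
  obtain t where t: "t \<in> min_ones n f" "leqB t (x[q := True])"
    using exists_min_one_below[of "x[q := True]" n f] x by auto
  have t': "length t = n" "f t" using t(1) unfolding min_ones_def by simp_all
  have "t ! q"
  proof (rule ccontr)
    assume "\<not> t ! q"
    then have "leqB t (x[q := False])"
      using t(2) leqB_update_False_iff[of t q "x[q := False]"] by simp
    then show False using positiveD[OF pos t'(1) _ t'(2)] nf by simp
  qed
  then have "leqB ?u t" using t'(1) q by (auto simp: leqB_def)
  moreover have "\<not> t ! j" using leqB_nthD[OF t(2), of j] t'(1) j x q(2) by auto
  then have "t \<in> min_ones n (fix_var f j True)" using K t(1) by simp
  ultimately have "?u = t" using f1u unfolding min_ones_def by simp
  then show False using nfu t'(2) by simp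
qed

lemma zeros_of_face_below_max_zero:
  assumes pos: "positive n f" and j: "j < n" and q: "q < n" "q \<noteq> j"
    and can: "canalyzes n (fix_var f j True) q True"
    and nfu: "\<not> f ((replicate n False)[q := True])"
    and K: "\<And>t. t \<in> min_ones n f \<Longrightarrow> \<not> t ! j \<Longrightarrow> t \<in> min_ones n (fix_var f j True)"
    and Z0: "{z \<in> max_zeros n f. \<not> z ! j} = {z0}"
    and x: "length x = n" "\<not> f x" "\<not> x ! j"
  shows "leqB x z0"
proof -
  have "\<not> f (x[q := True])"
  proof
    assume "f (x[q := True])"
    then have "f (x[q := False])"
      using update_False_if_update_True[OF pos j q nfu _ K x(1,3)] canalyzesD[OF can] by simp
    then show False using positiveD[OF pos _ leqB_update_False, of x q] x by simp
  qed
  then obtain z where z: "z \<in> max_zeros n f" "leqB (x[q := True]) z"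
    using exists_max_zero_above[of "x[q := True]" n f] x by auto
  have "\<not> z ! j"
  proof
    assume "z ! j"
    then have "leqB (x[q := True, j := True]) z" using z(2) by (auto simp: leqB_def)
    moreover have "f (x[q := True, j := True])"
      using canalyzesD[OF can, of x] x unfolding fix_var_def
      by (simp add: list_update_swap q(2))
    ultimately have "f z" using positiveD[OF pos, of "x[q := True, j := True]" z] x by simp
    then show False using z unfolding max_zeros_def by simp
  qed
  then have "z = z0" using z Z0 by blast
  then show ?thesis using leqB_trans[OF leqB_update_True z(2)] by simp
qed

lemma canalyzes_if_fix_True_constant:
  assumes pos: "positive n f" and jV: "j \<in> relevant_vars n f"
    and const: "relevant_vars n (fix_var f j True) = {}"
  shows "canalyzes n f j True"
proof -
  obtain x where x: "length x = n" "j < n" and ne: "f (x[j := False]) \<noteq> f (x[j := True])"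
    using jV unfolding relevant_vars_def by auto
  have "f (x[j := True])" using ne positive_update[OF pos x(1)] by auto
  then have "f (y[j := True])" if "length y = n" for y
    using constant_if_relevant_vars_empty[OF const that x(1)] unfolding fix_var_def by simp
  then show ?thesis using x(2) unfolding canalyzes_def by simp
qed

lemma canalyzes_False_if_canalyzes_fix_True:
  assumes pos: "positive n f" and can: "canalyzes n (fix_var f j True) q False"
  shows "canalyzes n f q False"
proof -
  have "\<not> f (y[q := False])" if "length y = n" for y
    using positiveD[OF pos _ leqB_update_True, of "y[q := False]" j] canalyzesD[OF can that] that
    unfolding fix_var_def by auto
  then show ?thesis using can unfolding canalyzes_def by simp
qed

lemma canalyzes_True_if_unit_vector:
  assumes pos: "positive n f" and q: "q < n" and fu: "f ((replicate n False)[q := True])"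
  shows "canalyzes n f q True"
proof -
  have "f (y[q := True])" if "length y = n" for y
    using positiveD[OF pos _ _ fu, of "y[q := True]"] that q by (auto simp: leqB_def)
  then show ?thesis using q unfolding canalyzes_def by simp
qed

lemma canalyzes_fix_var_ne:
  assumes "canalyzes n (fix_var f j a) q c" "relevant_vars n (fix_var f j a) \<noteq> {}"
  shows "q \<noteq> j"
proof
  assume "q = j"
  then have "fix_var f j a y = c" if "length y = n" for y
    using canalyzesD[OF assms(1) that] unfolding fix_var_def by simp
  then show False using assms(2) relevant_vars_empty_if_constant[of n "fix_var f j a" c] by simp
qed

lemma canalyzes_if_tight_step:
  assumes pos: "positive n f" and jV: "j \<in> relevant_vars n f"
    and K: "\<And>t. t \<in> min_ones n f \<Longrightarrow> \<not> t ! j \<Longrightarrow> t \<in> min_ones n (fix_var f j True)"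
    and Z0: "{z \<in> max_zeros n f. \<not> z ! j} = {z0}"
    and IH: "relevant_vars n (fix_var f j True) \<noteq> {} \<Longrightarrow> \<exists>q c. canalyzes n (fix_var f j True) q c"
  shows "\<exists>q c. canalyzes n f q c"
proof (cases "relevant_vars n (fix_var f j True) = {}")
  case True
  then show ?thesis using canalyzes_if_fix_True_constant[OF pos jV] by blast
next
  case False
  then obtain q c where can: "canalyzes n (fix_var f j True) q c" using IH by blast
  have j: "j < n" using jV relevant_vars_subset by auto
  have q: "q < n" "q \<noteq> j"
    using can canalyzes_fix_var_ne[OF can False] unfolding canalyzes_def by simp_all
  consider "\<not> c" | "f ((replicate n False)[q := True])" | "c" "\<not> f ((replicate n False)[q := True])"
    by blast
  then show ?thesis
  proof cases
    case 1
    then have "canalyzes n (fix_var f j True) q False" using can by simp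
    then show ?thesis using canalyzes_False_if_canalyzes_fix_True[OF pos] by blast
  next
    case 2
    then show ?thesis using canalyzes_True_if_unit_vector[OF pos q(1)] by blast
  next
    case 3
    have z0: "length z0 = n" "\<not> f z0" using Z0 unfolding max_zeros_def by auto
    show ?thesis
      using zeros_of_face_below_max_zero[OF pos j q _ 3(2) K Z0] can 3(1)
      by (intro canalyzes_if_zeros_of_face_below[OF pos j z0]) simp
  qed
qed

lemma lower_bound_and_canalyzes_step:
  assumes pos: "positive n f" and jV: "j \<in> relevant_vars n f"
    and keep: "relevant_vars n (fix_var f j True) = relevant_vars n f - {j}"
    and IH: "card (relevant_vars n (fix_var f j True)) + 1 \<le>
        card (extremal_points n (fix_var f j True)) \<and>
      (card (extremal_points n (fix_var f j True)) =
          card (relevant_vars n (fix_var f j True)) + 1 \<longrightarrow>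
        relevant_vars n (fix_var f j True) \<noteq> {} \<longrightarrow>
        (\<exists>q c. canalyzes n (fix_var f j True) q c))"
  shows "card (relevant_vars n f) + 1 \<le> card (extremal_points n f) \<and>
    (card (extremal_points n f) = card (relevant_vars n f) + 1 \<longrightarrow> (\<exists>q c. canalyzes n f q c))"
proof -
  let ?f1 = "fix_var f j True"
  let ?K = "{t \<in> min_ones n f. \<not> t ! j \<and> t \<notin> min_ones n ?f1}"
  let ?Z0 = "{z \<in> max_zeros n f. \<not> z ! j}"
  have j: "j < n" using jV relevant_vars_subset by auto
  have rel: "card (relevant_vars n ?f1) + 1 = card (relevant_vars n f)"
    using keep card_Suc_Diff1[OF finite_relevant_vars jV] by simp
  have "finite ?K" "finite ?Z0" unfolding min_ones_def max_zeros_def by simp_all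
  moreover have "?Z0 \<noteq> {}" by (rule exists_max_zero_off_relevant_var[OF pos jV])
  ultimately have Z0: "card ?Z0 \<ge> 1" by (simp add: Suc_leI card_gt_0_iff)
  have ext: "card (extremal_points n ?f1) + card ?K + card ?Z0 \<le> card (extremal_points n f)"
    using card_min_ones_fix_True_le[OF pos j] card_max_zeros_split[OF j, of f]
    by (simp add: card_extremal_points)
  have bound: "card (relevant_vars n f) + 1 \<le> card (extremal_points n f)"
    using ext conjunct1[OF IH] rel Z0 by linarith
  have "\<exists>q c. canalyzes n f q c"
    if tight: "card (extremal_points n f) = card (relevant_vars n f) + 1"
  proof -
    txt \<open>Equality forces every estimate in \<open>ext\<close> to be sharp.\<close>
    have "card ?K = 0" and "card ?Z0 = 1"
      and "card (extremal_points n ?f1) = card (relevant_vars n ?f1) + 1"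
      using ext tight IH rel Z0 by linarith+
    then obtain z0 where "?Z0 = {z0}" and "?K = {}" using \<open>finite ?K\<close> card_1_singletonE by auto
    then show ?thesis using canalyzes_if_tight_step[OF pos jV _ \<open>?Z0 = {z0}\<close>] IH
      \<open>card (extremal_points n ?f1) = _\<close> by blast
  qed
  with bound show ?thesis by blast
qed

lemma lower_bound_and_canalyzes_if_tight:
  assumes "positive n f"
  shows "card (relevant_vars n f) + 1 \<le> card (extremal_points n f) \<and>
    (card (extremal_points n f) = card (relevant_vars n f) + 1 \<longrightarrow>
      relevant_vars n f \<noteq> {} \<longrightarrow> (\<exists>j c. canalyzes n f j c))"
  using assms
proof (induction "card (relevant_vars n f)" arbitrary: f rule: less_induct)
  case less
  show ?case
  proof (cases "relevant_vars n f = {}")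
    case True
    then show ?thesis by (simp add: card_extremal_points_if_relevant_vars_empty)
  next
    case False
    obtain j a where jV: "j \<in> relevant_vars n f"
      and keep: "relevant_vars n (fix_var f j a) = relevant_vars n f - {j}"
      using exists_relevant_var_fix_var_keeps_relevant_vars[OF less.prems False] by blast
    have smaller: "card (relevant_vars n f - {j}) < card (relevant_vars n f)"
      using card_Diff1_less[OF finite_relevant_vars jV] .
    show ?thesis
    proof (cases a)
      case True
      then show ?thesis
        using lower_bound_and_canalyzes_step[OF less.prems jV] less.hyps[of "fix_var f j True"]
          keep smaller positive_fix_var[OF less.prems] by simp
    next
      case False
      let ?g = "dual f"
      have keep': "relevant_vars n (fix_var ?g j True) = relevant_vars n ?g - {j}"
        using keep False by (simp add: fix_var_dual relevant_vars_dual)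
      have "card (relevant_vars n ?g) + 1 \<le> card (extremal_points n ?g) \<and>
        (card (extremal_points n ?g) = card (relevant_vars n ?g) + 1 \<longrightarrow>
          (\<exists>q c. canalyzes n ?g q c))"
        using lower_bound_and_canalyzes_step[OF positive_dual[OF less.prems] _ keep'] jV
          less.hyps[of "fix_var ?g j True"] keep' smaller
          positive_fix_var[OF positive_dual[OF less.prems]]
        by (simp add: relevant_vars_dual)
      then show ?thesis
        by (auto simp: relevant_vars_dual card_extremal_points_dual canalyzes_dual)
    qed
  qed
qed

section \<open>Nested formulas\<close>

lemma eval_nested_update: "i \<notin> nvars t \<Longrightarrow> eval_nested t (x[i := a]) = eval_nested t x"
  by (induction t) auto

lemma card_extremal_points_nested:
  assumes "wf_nested n t" "positive n f" "\<forall>x\<in>points n. f x = eval_nested t x"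
  shows "card (extremal_points n f) = card (relevant_vars n f) + 1"
  using assms
proof (induction t arbitrary: f)
  case (Lit i b)
  have forced: "\<forall>x\<in>points n. f (x[i := b]) = True" using Lit.prems by auto
  have "\<forall>x\<in>points n. fix_var f i (\<not> b) x = False"
    using Lit.prems unfolding fix_var_def by auto
  then have "relevant_vars n (fix_var f i (\<not> b)) = {}" by (rule relevant_vars_empty_if_constant)
  then have "card (extremal_points n (fix_var f i (\<not> b))) =
      card (relevant_vars n (fix_var f i (\<not> b))) + 1"
    by (simp add: card_extremal_points_if_relevant_vars_empty)
  then show ?case
    using card_extremal_points_if_forcing[OF Lit.prems(2) _ forced] Lit.prems(1) by simp
next
  case (NOr i b t)
  have forced: "\<forall>x\<in>points n. f (x[i := b]) = True" using NOr.prems by auto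
  have "\<forall>x\<in>points n. fix_var f i (\<not> b) x = eval_nested t x"
    using NOr.prems eval_nested_update[of i t] unfolding fix_var_def by auto
  then have "card (extremal_points n (fix_var f i (\<not> b))) =
      card (relevant_vars n (fix_var f i (\<not> b))) + 1"
    using NOr.IH NOr.prems positive_fix_var by simp
  then show ?case
    using card_extremal_points_if_forcing[OF NOr.prems(2) _ forced] NOr.prems(1) by simp
next
  case (NAnd i b t)
  have forced: "\<forall>x\<in>points n. f (x[i := \<not> b]) = False" using NAnd.prems by auto
  have "\<forall>x\<in>points n. fix_var f i (\<not> \<not> b) x = eval_nested t x"
    using NAnd.prems eval_nested_update[of i t] unfolding fix_var_def by auto
  then have "card (extremal_points n (fix_var f i (\<not> \<not> b))) =
      card (relevant_vars n (fix_var f i (\<not> \<not> b))) + 1"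
    using NAnd.IH NAnd.prems positive_fix_var by simp
  then show ?case
    using card_extremal_points_if_forcing[OF NAnd.prems(2) _ forced] NAnd.prems(1) by simp
qed

lemma canalyzes_eq_or_and:
  assumes "canalyzes n f j c" "length x = n"
  shows "f x = (if c then x ! j \<or> fix_var f j (\<not> c) x else x ! j \<and> fix_var f j (\<not> c) x)"
  using canalyzesD[OF assms] unfolding fix_var_def by (cases c; cases "x ! j") simp_all

lemma eq_nth_if_canalyzes_fix_var_constant:
  assumes can: "canalyzes n f j c" and rel: "relevant_vars n f \<noteq> {}"
    and const: "relevant_vars n (fix_var f j (\<not> c)) = {}"
  shows "\<forall>x\<in>points n. f x = x ! j"
proof -
  define v where "v = fix_var f j (\<not> c) (replicate n False)"
  have g_const: "fix_var f j (\<not> c) x = v" if "length x = n" for x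
    using constant_if_relevant_vars_empty[OF const that] unfolding v_def by simp
  have "v \<noteq> c"
  proof
    assume "v = c"
    then have "f x = c" if "length x = n" for x
      using canalyzes_eq_or_and[OF can that] g_const[OF that] by (cases c) auto
    then show False using rel relevant_vars_empty_if_constant[of n f c] by simp
  qed
  then show ?thesis using canalyzes_eq_or_and[OF can] g_const by (cases c) auto
qed

lemma exists_nested_if_tight:
  assumes "positive n f" "card (extremal_points n f) = card (relevant_vars n f) + 1"
    and "relevant_vars n f \<noteq> {}"
  shows "\<exists>t. wf_nested n t \<and> nvars t \<subseteq> relevant_vars n f \<and> (\<forall>x\<in>points n. f x = eval_nested t x)"
  using assms
proof (induction "card (relevant_vars n f)" arbitrary: f rule: less_induct)
  case less
  obtain j c where can: "canalyzes n f j c"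
    using lower_bound_and_canalyzes_if_tight[OF less.prems(1)] less.prems(2,3) by blast
  let ?g = "fix_var f j (\<not> c)"
  have j: "j < n" using can unfolding canalyzes_def by simp
  have step: "card (extremal_points n f) = card (extremal_points n ?g) + 1"
    and rel: "relevant_vars n f = insert j (relevant_vars n ?g)"
    using card_extremal_points_relevant_vars_canalyzes[OF less.prems(1) can less.prems(3)] by blast+
  have j_notin: "j \<notin> relevant_vars n ?g" using relevant_vars_fix_var_subset by blast
  show ?case
  proof (cases "relevant_vars n ?g = {}")
    case True
    then have "\<forall>x\<in>points n. f x = eval_nested (Lit j True) x"
      using eq_nth_if_canalyzes_fix_var_constant[OF can less.prems(3)] by simp
    then show ?thesis using j rel by (intro exI[of _ "Lit j True"]) auto
  next
    case False
    have "card (relevant_vars n ?g) < card (relevant_vars n f)"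
      using rel j_notin by simp
    moreover have "card (extremal_points n ?g) = card (relevant_vars n ?g) + 1"
      using step rel j_notin less.prems(2) by simp
    ultimately obtain t where t: "wf_nested n t" "nvars t \<subseteq> relevant_vars n ?g"
      and eval: "\<forall>x\<in>points n. ?g x = eval_nested t x"
      using less.hyps[OF _ positive_fix_var[OF less.prems(1)] _ False] by blast
    let ?t = "if c then NOr j True t else NAnd j True t"
    have "wf_nested n ?t" "nvars ?t \<subseteq> relevant_vars n f" using t j rel j_notin by auto
    moreover have "\<forall>x\<in>points n. f x = eval_nested ?t x"
      using canalyzes_eq_or_and[OF can] eval by (cases c) auto
    ultimately show ?thesis by blast
  qed
qed

lemma lro_iff_tight:
  assumes pos: "positive n f"
  shows "lro n f \<longleftrightarrow> card (extremal_points n f) = card (relevant_vars n f) + 1"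
proof
  assume "lro n f"
  then consider c where "\<forall>x\<in>points n. f x = c"
    | t where "wf_nested n t" "\<forall>x\<in>points n. f x = eval_nested t x"
    unfolding lro_def by blast
  then show "card (extremal_points n f) = card (relevant_vars n f) + 1"
  proof cases
    case 1
    then have "relevant_vars n f = {}" by (rule relevant_vars_empty_if_constant)
    then show ?thesis by (simp add: card_extremal_points_if_relevant_vars_empty)
  next
    case 2
    then show ?thesis by (rule card_extremal_points_nested[OF _ pos])
  qed
next
  assume tight: "card (extremal_points n f) = card (relevant_vars n f) + 1"
  show "lro n f"
  proof (cases "relevant_vars n f = {}")
    case True
    have "\<forall>x\<in>points n. f x = f (replicate n False)"
      using constant_if_relevant_vars_empty[OF True _ length_replicate[of n False]] in_points_iff
      by blast
    then show ?thesis unfolding lro_def by blast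
  next
    case False
    then show ?thesis using exists_nested_if_tight[OF pos tight] unfolding lro_def by blast
  qed
qed

theorem mainTheorem3:
  fixes n k :: nat and f :: "bool list \<Rightarrow> bool"
  assumes "positive n f" and "canalyzing n f"
    and "k = card {i. relevant n f i}"
  shows "k + 1 \<le> card (extremal_points n f) \<and>
         (card (extremal_points n f) = k + 1 \<longleftrightarrow> lro n f)"
proof -
  have "k = card (relevant_vars n f)"
    using assms(3) relevant_iff_in_relevant_vars by simp
  then show ?thesis
    using lower_bound_and_canalyzes_if_tight[OF assms(1)] lro_iff_tight[OF assms(1)] by simp
qed

end
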